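(* Let $t\geq 2$ be an integer. There are a positive constant $c$ and $n_0\in\mathbb{N}$ such that for every $n>n_0$: $$\mathrm{IR}(2K_2, K_{1,n}) \leq n + c\, n \log^{-1/4} n,\qquad \mathrm{IR}(P_4, K_{1,n}) \leq n + c\, n\log^{-1/4} n,\qquad \mathrm{IR}(K_{t,t}, K_{1,n}) \leq n + c\, n^{1-\frac{1}{2t}}.$$
   Context: All graphs are finite and simple. $K_{1,n}$ is the star with $n$ edges, $2K_2$ is the disjoint union of two edges, $P_4$ is the path on $4$ vertices, $K_{t,t}$ is the complete bipartite graph with parts of size $t$. For graphs $F$, $H$, $G$, write $F \overset{\text{ind}}{\longrightarrow} (H,G)$ if for every coloring of the edges of $F$ with red and blue there is either a red induced copy of $H$ (a vertex set $S\subseteq V(F)$ with $F[S]\cong H$ and all edges of $F[S]$ red) or a blue induced copy of $G$ (defined analogously with blue). The induced Ramsey number $\mathrm{IR}(H,G)$ is the smallest number of vertices of a graph $F$ with $F \overset{\text{ind}}{\longrightarrow} (H,G)$. *)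

theory Defs
  imports Complex_Main
begin

definition simple_graph :: "'a set \<Rightarrow> 'a set set \<Rightarrow> bool" where
  "simple_graph V E \<longleftrightarrow> finite V \<and> (\<forall>e\<in>E. \<exists>u v. u \<in> V \<and> v \<in> V \<and> u \<noteq> v \<and> e = {u, v})"

definition mono_induced_copy ::
  "'b set \<Rightarrow> 'b set set \<Rightarrow> 'a set \<Rightarrow> 'a set set \<Rightarrow> ('a set \<Rightarrow> bool) \<Rightarrow> bool \<Rightarrow> bool" where
  "mono_induced_copy VH EH VF EF col c \<longleftrightarrow>
     (\<exists>S f. S \<subseteq> VF \<and> bij_betw f VH S \<and>
        (\<forall>u\<in>VH. \<forall>v\<in>VH. ({u, v} \<in> EH \<longleftrightarrow> {f u, f v} \<in> EF)) \<and>
        (\<forall>e\<in>EF. e \<subseteq> S \<longrightarrow> col e = c))"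

text \<open>F ind-arrows (H, G): every red/blue colouring (True = red, False = blue) of the
  edges of F yields a red induced H or a blue induced G.\<close>

definition ind_arrows ::
  "'a set \<Rightarrow> 'a set set \<Rightarrow> 'b set \<Rightarrow> 'b set set \<Rightarrow> 'c set \<Rightarrow> 'c set set \<Rightarrow> bool" where
  "ind_arrows VF EF VH EH VG EG \<longleftrightarrow>
     (\<forall>col :: 'a set \<Rightarrow> bool.
        mono_induced_copy VH EH VF EF col True \<or> mono_induced_copy VG EG VF EF col False)"

text \<open>Induced Ramsey number: least number of vertices of a graph F with F ind-arrows (H,G).
  Every finite graph is isomorphic to one on vertex set {0..<N}.\<close>

definition IR :: "'b set \<Rightarrow> 'b set set \<Rightarrow> 'c set \<Rightarrow> 'c set set \<Rightarrow> nat" where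
  "IR VH EH VG EG = (LEAST N. \<exists>EF :: nat set set.
      simple_graph {0..<N} EF \<and> ind_arrows {0..<N} EF VH EH VG EG)"

definition twoK2_V :: "nat set" where "twoK2_V = {0, 1, 2, 3}"
definition twoK2_E :: "nat set set" where "twoK2_E = {{0, 1}, {2, 3}}"

definition P4_V :: "nat set" where "P4_V = {0, 1, 2, 3}"
definition P4_E :: "nat set set" where "P4_E = {{0, 1}, {1, 2}, {2, 3}}"

definition star_V :: "nat \<Rightarrow> nat set" where "star_V n = {0..n}"
definition star_E :: "nat \<Rightarrow> nat set set" where "star_E n = {{0, i} | i. i \<in> {1..n}}"

definition Ktt_V :: "nat \<Rightarrow> nat set" where "Ktt_V t = {0..<2*t}"
definition Ktt_E :: "nat \<Rightarrow> nat set set" where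
  "Ktt_E t = {{i, j} | i j. i < t \<and> t \<le> j \<and> j < 2*t}"

end

theory Submission
  imports Defs "HOL-Library.FuncSet" "HOL-Real_Asymp.Real_Asymp"
begin

text \<open>All hosts are bipartite graphs with parts \<open>A\<close> and \<open>B\<close>. A colouring without a blue
  induced \<open>K\<^sub>1\<^sub>,\<^sub>n\<close> leaves every vertex of \<open>A\<close> with fewer than \<open>n\<close> blue edges, so
  red degrees are almost full degrees.

  For \<open>K\<^sub>t\<^sub>,\<^sub>t\<close> the host is \<open>K\<^sub>m\<^sub>,\<^sub>N\<close> with \<open>m \<approx> t \<surd>n\<close> and
  \<open>N \<approx> n + 2t n\<^sup>1\<^sup>-\<^sup>1\<^sup>/\<^sup>(\<^sup>2\<^sup>t\<^sup>)\<close>: counting \<open>t\<close>-subsets of the red neighbourhoods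
  (as for the Kovari-Sos-Turan bound) produces a red \<open>K\<^sub>t\<^sub>,\<^sub>t\<close>.

  For \<open>2K\<^sub>2\<close> and \<open>P\<^sub>4\<close> the host has \<open>A = [d] \<times> [p]\<close> and \<open>B\<close> a set of \<open>N\<close> words in
  \<open>[p]\<^sup>d\<close>, where \<open>(i, v)\<close> is adjacent to \<open>b\<close> unless \<open>b\<^sub>i = v\<close>; every vertex of \<open>A\<close>
  misses at most \<open>p\<^sup>d\<^sup>-\<^sup>1\<close> words. By AM-GM, a red neighbourhood of size \<open>\<rho>\<close> uses all
  but \<open>p ln (p\<^sup>d / \<rho>)\<close> of the \<open>dp\<close> pairs (coordinate, value). For \<open>2K\<^sub>2\<close> this makes
  "some red neighbour of \<open>a\<close> misses \<open>a'\<close>" hold for at least half of all \<open>a'\<close>, for every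
  \<open>a\<close>, so it holds both ways for some pair \<open>a \<noteq> a'\<close>; for \<open>P\<^sub>4\<close> it bounds the red
  codegrees, and double counting finds \<open>b\<^sub>1, b\<^sub>2\<close> red at \<open>a\<close> with \<open>b\<^sub>2\<close> also red at some \<open>a'\<close> missing \<open>b\<^sub>1\<close>.
  With \<open>d \<approx> (ln n)\<^sup>1\<^sup>/\<^sup>2\<close> and \<open>p \<approx> (2n)\<^sup>1\<^sup>/\<^sup>d\<close> the host has
  \<open>n + O(n (ln n)\<^sup>-\<^sup>1\<^sup>/\<^sup>4)\<close> vertices.\<close>

section \<open>Arrowing graphs bound the induced Ramsey number\<close>

lemma mono_induced_copyI:
  assumes "inj_on f VH" "f ` VH \<subseteq> VF"
    and "\<And>u v. u \<in> VH \<Longrightarrow> v \<in> VH \<Longrightarrow> {u, v} \<in> EH \<longleftrightarrow> {f u, f v} \<in> EF"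
    and "\<And>e. e \<in> EF \<Longrightarrow> e \<subseteq> f ` VH \<Longrightarrow> col e = c"
  shows "mono_induced_copy VH EH VF EF col c"
  unfolding mono_induced_copy_def
  by (intro exI[of _ "f ` VH"] exI[of _ f] conjI ballI impI inj_on_imp_bij_betw) (use assms in auto)

lemma mono_induced_copy_image:
  assumes g: "inj_on g V" and E: "\<And>e. e \<in> E \<Longrightarrow> e \<subseteq> V"
    and copy: "mono_induced_copy VH EH V E (\<lambda>e. col (g ` e)) c"
  shows "mono_induced_copy VH EH (g ` V) ((`) g ` E) col c"
proof -
  from copy obtain S f where S: "S \<subseteq> V" "bij_betw f VH S"
    and iso: "\<forall>u\<in>VH. \<forall>v\<in>VH. {u, v} \<in> EH \<longleftrightarrow> {f u, f v} \<in> E"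
    and mono: "\<forall>e\<in>E. e \<subseteq> S \<longrightarrow> col (g ` e) = c"
    unfolding mono_induced_copy_def by blast
  have image_edge_iff: "g ` e \<in> (`) g ` E \<longleftrightarrow> e \<in> E" if "e \<subseteq> V" for e
  proof
    assume "g ` e \<in> (`) g ` E"
    then obtain e' where "e' \<in> E" "g ` e = g ` e'" by blast
    then have "e = e'"
      using inj_onD[OF inj_on_image_Pow[OF g]] E that by blast
    then show "e \<in> E" using \<open>e' \<in> E\<close> by simp
  qed simp
  have fV: "f u \<in> V" if "u \<in> VH" for u
    using S that by (auto dest: bij_betwE)
  show ?thesis
    unfolding mono_induced_copy_def
  proof (intro exI conjI ballI impI)
    show "g ` S \<subseteq> g ` V" using S(1) by blast
    show "bij_betw (g \<circ> f) VH (g ` S)"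
      using bij_betw_trans[OF S(2) inj_on_imp_bij_betw[OF inj_on_subset[OF g S(1)]]] .
    fix u v assume "u \<in> VH" "v \<in> VH"
    then show "{u, v} \<in> EH \<longleftrightarrow> {(g \<circ> f) u, (g \<circ> f) v} \<in> (`) g ` E"
      using iso image_edge_iff[of "{f u, f v}"] fV by simp
  next
    fix e' assume "e' \<in> (`) g ` E" "e' \<subseteq> g ` S"
    then obtain e where "e \<in> E" "e' = g ` e" by blast
    moreover have "e \<subseteq> S"
    proof
      fix x assume "x \<in> e"
      then have "g x \<in> g ` S" "x \<in> V" using \<open>e' \<subseteq> g ` S\<close> \<open>e' = g ` e\<close> E \<open>e \<in> E\<close> by auto
      then show "x \<in> S" using inj_on_image_mem_iff[OF g _ S(1)] by blast
    qed
    ultimately show "col e' = c" using mono by simp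
  qed
qed

lemma IR_le_card:
  assumes G: "simple_graph V E" and arrows: "ind_arrows V E VH EH VG EG"
  shows "IR VH EH VG EG \<le> card V"
proof -
  have "finite V" using G unfolding simple_graph_def by blast
  then obtain g where g: "bij_betw g V {0..<card V}"
    using ex_bij_betw_finite_nat by blast
  then have g_inj: "inj_on g V" and gV: "g ` V = {0..<card V}"
    by (auto simp: bij_betw_def)
  have E: "\<And>e. e \<in> E \<Longrightarrow> e \<subseteq> V" using G unfolding simple_graph_def by fastforce
  define EF where "EF = (`) g ` E"
  have "simple_graph {0..<card V} EF"
    unfolding simple_graph_def
  proof (intro conjI ballI)
    fix e' assume "e' \<in> EF"
    then obtain u v where "u \<in> V" "v \<in> V" "u \<noteq> v" "e' = {g u, g v}"
      using G unfolding EF_def simple_graph_def by auto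
    then show "\<exists>u v. u \<in> {0..<card V} \<and> v \<in> {0..<card V} \<and> u \<noteq> v \<and> e' = {u, v}"
      using gV inj_on_contraD[OF g_inj] by blast
  qed simp
  moreover have "ind_arrows {0..<card V} EF VH EH VG EG"
    unfolding ind_arrows_def
  proof
    fix col :: "nat set \<Rightarrow> bool"
    have "mono_induced_copy VH EH V E (\<lambda>e. col (g ` e)) True \<or>
          mono_induced_copy VG EG V E (\<lambda>e. col (g ` e)) False"
      using arrows unfolding ind_arrows_def by blast
    then show "mono_induced_copy VH EH {0..<card V} EF col True \<or>
          mono_induced_copy VG EG {0..<card V} EF col False"
      unfolding EF_def gV[symmetric]
      by (elim disjE) (simp_all add: mono_induced_copy_image[OF g_inj E])
  qed
  ultimately have "\<exists>EF. simple_graph {0..<card V} EF \<and> ind_arrows {0..<card V} EF VH EH VG EG"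
    by blast
  then show ?thesis
    unfolding IR_def by (rule Least_le)
qed

section \<open>Bipartite hosts and blue stars\<close>

definition bip_edges :: "'a set \<Rightarrow> 'b set \<Rightarrow> ('a \<Rightarrow> 'b \<Rightarrow> bool) \<Rightarrow> ('a + 'b) set set" where
  "bip_edges A B adj = {{Inl a, Inr b} | a b. a \<in> A \<and> b \<in> B \<and> adj a b}"

lemma Inl_Inr_in_bip_edges [simp]:
  "{Inl a, Inr b} \<in> bip_edges A B adj \<longleftrightarrow> a \<in> A \<and> b \<in> B \<and> adj a b"
  unfolding bip_edges_def by (auto simp: doubleton_eq_iff)

lemma Inr_Inl_in_bip_edges [simp]:
  "{Inr b, Inl a} \<in> bip_edges A B adj \<longleftrightarrow> a \<in> A \<and> b \<in> B \<and> adj a b"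
  unfolding bip_edges_def by (auto simp: doubleton_eq_iff)

lemma Inl_Inl_notin_bip_edges [simp]: "{Inl a, Inl a'} \<notin> bip_edges A B adj"
  unfolding bip_edges_def by (auto simp: doubleton_eq_iff)

lemma Inr_Inr_notin_bip_edges [simp]: "{Inr b, Inr b'} \<notin> bip_edges A B adj"
  unfolding bip_edges_def by (auto simp: doubleton_eq_iff)

lemma singleton_notin_bip_edges [simp]: "{x} \<notin> bip_edges A B adj"
  unfolding bip_edges_def by (auto simp: doubleton_eq_iff)

lemma bip_edgesE:
  assumes "e \<in> bip_edges A B adj"
  obtains a b where "a \<in> A" "b \<in> B" "adj a b" "e = {Inl a, Inr b}"
  using assms unfolding bip_edges_def by blast

lemma simple_graph_bip_edges:
  "finite A \<Longrightarrow> finite B \<Longrightarrow> simple_graph (A <+> B) (bip_edges A B adj)"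
  unfolding simple_graph_def bip_edges_def by auto

definition red_nbhd :: "'b set \<Rightarrow> ('a \<Rightarrow> 'b \<Rightarrow> bool) \<Rightarrow> (('a + 'b) set \<Rightarrow> bool) \<Rightarrow> 'a \<Rightarrow> 'b set" where
  "red_nbhd B adj col a = {b \<in> B. adj a b \<and> col {Inl a, Inr b}}"

lemma red_nbhd_subset: "red_nbhd B adj col a \<subseteq> B"
  and red_nbhd_adj: "b \<in> red_nbhd B adj col a \<Longrightarrow> adj a b"
  unfolding red_nbhd_def by auto

lemma bip_copyI:
  assumes "inj_on f VH" "f ` VH \<subseteq> A <+> B"
    and "\<And>u v. u \<in> VH \<Longrightarrow> v \<in> VH \<Longrightarrow> {u, v} \<in> EH \<longleftrightarrow> {f u, f v} \<in> bip_edges A B adj"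
    and "\<And>a b. Inl a \<in> f ` VH \<Longrightarrow> Inr b \<in> f ` VH \<Longrightarrow> adj a b \<Longrightarrow> col {Inl a, Inr b} = c"
  shows "mono_induced_copy VH EH (A <+> B) (bip_edges A B adj) col c"
proof (rule mono_induced_copyI[OF assms(1-3)])
  fix e assume "e \<in> bip_edges A B adj" "e \<subseteq> f ` VH"
  then show "col e = c" using assms(4) by (auto elim!: bip_edgesE)
qed

lemma star_E_iff:
  "{u, v} \<in> star_E n \<longleftrightarrow> (u = 0 \<and> v \<in> {1..n}) \<or> (v = 0 \<and> u \<in> {1..n})"
  unfolding star_E_def by (auto simp: doubleton_eq_iff)

lemma star_copy_bip:
  assumes a: "a \<in> A" and L: "finite L" "card L = n" "L \<subseteq> B"
    and blue: "\<And>b. b \<in> L \<Longrightarrow> adj a b \<and> \<not> col {Inl a, Inr b}"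
  shows "mono_induced_copy (star_V n) (star_E n) (A <+> B) (bip_edges A B adj) col False"
proof -
  obtain h where h: "bij_betw h {1..n} L"
    using ex_bij_betw_nat_finite_1[OF L(1)] L(2) by blast
  have hL: "h i \<in> L" if "i \<in> {1..n}" for i using bij_betwE[OF h] that by blast
  define f where "f i = (if i = 0 then Inl a else Inr (h i))" for i
  have "f ` {1..n} = Inr ` h ` {1..n}"
    unfolding image_image by (rule image_cong) (auto simp: f_def)
  moreover have "star_V n = insert 0 {1..n}" unfolding star_V_def by auto
  moreover have "f 0 = Inl a" by (simp add: f_def)
  ultimately have img: "f ` star_V n = insert (Inl a) (Inr ` L)"
    using bij_betw_imp_surj_on[OF h] by (simp only: image_insert)
  show ?thesis
  proof (rule bip_copyI)
    show "inj_on f (star_V n)"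
      using inj_onD[OF bij_betw_imp_inj_on[OF h]] by (auto simp: inj_on_def f_def star_V_def)
    show "f ` star_V n \<subseteq> A <+> B" using img a L(3) by auto
    show "{u, v} \<in> star_E n \<longleftrightarrow> {f u, f v} \<in> bip_edges A B adj"
      if "u \<in> star_V n" "v \<in> star_V n" for u v
      using that hL blue a L(3) by (auto simp: star_E_iff f_def star_V_def)
    show "col {Inl a', Inr b} = False" if "Inl a' \<in> f ` star_V n" "Inr b \<in> f ` star_V n" for a' b
      using that blue unfolding img by auto
  qed
qed

lemma ind_arrows_bip_starI:
  assumes red_copy: "\<And>col. (\<And>a. a \<in> A \<Longrightarrow> card {b \<in> B. adj a b} < card (red_nbhd B adj col a) + n)
      \<Longrightarrow> mono_induced_copy VH EH (A <+> B) (bip_edges A B adj) col True"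
  shows "ind_arrows (A <+> B) (bip_edges A B adj) VH EH (star_V n) (star_E n)"
  unfolding ind_arrows_def
proof (intro allI disjCI)
  fix col
  assume no_star: "\<not> mono_induced_copy (star_V n) (star_E n) (A <+> B) (bip_edges A B adj) col False"
  show "mono_induced_copy VH EH (A <+> B) (bip_edges A B adj) col True"
  proof (rule red_copy)
    fix a assume a: "a \<in> A"
    define blue where "blue = {b \<in> B. adj a b \<and> \<not> col {Inl a, Inr b}}"
    have "card blue < n"
    proof (rule ccontr)
      assume "\<not> card blue < n"
      then obtain L where "L \<subseteq> blue" "card L = n" "finite L"
        by (meson not_less obtain_subset_with_card_n)
      then show False
        using no_star star_copy_bip[OF a, of L n B adj col] unfolding blue_def by blast
    qed
    moreover have "{b \<in> B. adj a b} = red_nbhd B adj col a \<union> blue"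
      unfolding blue_def red_nbhd_def by blast
    then have "card {b \<in> B. adj a b} \<le> card (red_nbhd B adj col a) + card blue"
      by (simp add: card_Un_le)
    ultimately show "card {b \<in> B. adj a b} < card (red_nbhd B adj col a) + n"
      by linarith
  qed
qed

lemma twoK2_copy_bip:
  assumes "a1 \<in> A" "a2 \<in> A" "a1 \<noteq> a2"
    and "b1 \<in> red_nbhd B adj col a1" "b2 \<in> red_nbhd B adj col a2"
    and "\<not> adj a1 b2" "\<not> adj a2 b1"
  shows "mono_induced_copy twoK2_V twoK2_E (A <+> B) (bip_edges A B adj) col True"
proof -
  have b: "b1 \<in> B" "b2 \<in> B" "adj a1 b1" "adj a2 b2" "col {Inl a1, Inr b1}" "col {Inl a2, Inr b2}"
    using assms(4,5) unfolding red_nbhd_def by auto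
  then have "b1 \<noteq> b2" using assms(6) by blast
  define f where "f i = (if i = (0::nat) then Inl a1 else if i = 1 then Inr b1
    else if i = 2 then Inl a2 else Inr b2)" for i
  have img: "f ` twoK2_V = {Inl a1, Inr b1, Inl a2, Inr b2}"
    unfolding f_def twoK2_V_def by auto
  show ?thesis
  proof (rule bip_copyI)
    show "inj_on f twoK2_V"
      using assms(3) \<open>b1 \<noteq> b2\<close> unfolding inj_on_def f_def twoK2_V_def by auto
    show "f ` twoK2_V \<subseteq> A <+> B" using img assms(1,2) b by auto
    show "{u, v} \<in> twoK2_E \<longleftrightarrow> {f u, f v} \<in> bip_edges A B adj"
      if "u \<in> twoK2_V" "v \<in> twoK2_V" for u v
      using that assms b unfolding twoK2_V_def twoK2_E_def f_def
      by (auto simp: doubleton_eq_iff insert_commute)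
    show "col {Inl a, Inr b} = True" if "Inl a \<in> f ` twoK2_V" "Inr b \<in> f ` twoK2_V" "adj a b" for a b
      using that assms(6,7) b unfolding img by auto
  qed
qed

lemma P4_copy_bip:
  assumes "a1 \<in> A" "a2 \<in> A" "a1 \<noteq> a2"
    and "b1 \<in> red_nbhd B adj col a1" "b2 \<in> red_nbhd B adj col a1" "b2 \<in> red_nbhd B adj col a2"
    and "\<not> adj a2 b1"
  shows "mono_induced_copy P4_V P4_E (A <+> B) (bip_edges A B adj) col True"
proof -
  have b: "b1 \<in> B" "b2 \<in> B" "adj a1 b1" "adj a1 b2" "adj a2 b2"
    "col {Inl a1, Inr b1}" "col {Inl a1, Inr b2}" "col {Inl a2, Inr b2}"
    using assms(4-6) unfolding red_nbhd_def by auto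
  then have "b1 \<noteq> b2" using assms(7) by blast
  define f where "f i = (if i = (0::nat) then Inr b1 else if i = 1 then Inl a1
    else if i = 2 then Inr b2 else Inl a2)" for i
  have img: "f ` P4_V = {Inr b1, Inl a1, Inr b2, Inl a2}"
    unfolding f_def P4_V_def by auto
  show ?thesis
  proof (rule bip_copyI)
    show "inj_on f P4_V"
      using assms(3) \<open>b1 \<noteq> b2\<close> unfolding inj_on_def f_def P4_V_def by auto
    show "f ` P4_V \<subseteq> A <+> B" using img assms(1,2) b by auto
    show "{u, v} \<in> P4_E \<longleftrightarrow> {f u, f v} \<in> bip_edges A B adj"
      if "u \<in> P4_V" "v \<in> P4_V" for u v
      using that assms b unfolding P4_V_def P4_E_def f_def
      by (auto simp: doubleton_eq_iff insert_commute)
    show "col {Inl a, Inr b} = True" if "Inl a \<in> f ` P4_V" "Inr b \<in> f ` P4_V" "adj a b" for a b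
      using that assms(7) b unfolding img by auto
  qed
qed

lemma Ktt_E_iff:
  "{u, v} \<in> Ktt_E t \<longleftrightarrow> (u < t \<and> t \<le> v \<and> v < 2 * t) \<or> (v < t \<and> t \<le> u \<and> u < 2 * t)"
  unfolding Ktt_E_def by (auto simp: doubleton_eq_iff)

lemma Ktt_copy_bip:
  assumes A': "A' \<subseteq> A" "finite A'" "card A' = t"
    and T: "T \<subseteq> B" "finite T" "card T = t" "\<And>a. a \<in> A' \<Longrightarrow> T \<subseteq> red_nbhd B adj col a"
  shows "mono_induced_copy (Ktt_V t) (Ktt_E t) (A <+> B) (bip_edges A B adj) col True"
proof -
  have red: "adj a b \<and> col {Inl a, Inr b}" if "a \<in> A'" "b \<in> T" for a b
    using T(4) that unfolding red_nbhd_def by blast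
  obtain h1 where h1: "bij_betw h1 {0..<t} A'"
    using ex_bij_betw_nat_finite[OF A'(2)] A'(3) by blast
  obtain h2 where h2: "bij_betw h2 {0..<t} T"
    using ex_bij_betw_nat_finite[OF T(2)] T(3) by blast
  have h1A: "h1 i \<in> A'" and h2T: "h2 i \<in> T" if "i < t" for i
    using bij_betwE[OF h1] bij_betwE[OF h2] that by auto
  define f where "f i = (if i < t then Inl (h1 i) else Inr (h2 (i - t)))" for i
  have img: "f ` Ktt_V t \<subseteq> Inl ` A' \<union> Inr ` T"
    unfolding f_def Ktt_V_def using h1A h2T by auto
  show ?thesis
  proof (rule bip_copyI)
    show "inj_on f (Ktt_V t)"
    proof (rule inj_onI)
      fix x y assume "x \<in> Ktt_V t" "y \<in> Ktt_V t" "f x = f y"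
      moreover have "x - t = y - t"
        if "\<not> x < t" "\<not> y < t" "x < 2 * t" "y < 2 * t" "h2 (x - t) = h2 (y - t)"
        using inj_onD[OF bij_betw_imp_inj_on[OF h2], of "x - t" "y - t"] that by auto
      ultimately show "x = y"
        using inj_onD[OF bij_betw_imp_inj_on[OF h1]] by (auto simp: f_def Ktt_V_def split: if_splits)
    qed
    show "f ` Ktt_V t \<subseteq> A <+> B"
      using A'(1) T(1) by (intro order_trans[OF img]) auto
    show "{u, v} \<in> Ktt_E t \<longleftrightarrow> {f u, f v} \<in> bip_edges A B adj"
      if "u \<in> Ktt_V t" "v \<in> Ktt_V t" for u v
      using that h1A h2T red A'(1) T(1) by (auto simp: Ktt_E_iff f_def Ktt_V_def)
    show "col {Inl a, Inr b} = True" if "Inl a \<in> f ` Ktt_V t" "Inr b \<in> f ` Ktt_V t" for a b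
    proof -
      have "a \<in> A'" "b \<in> T" using that img by auto
      then show ?thesis using red by simp
    qed
  qed
qed

section \<open>Complete bipartite graphs against stars\<close>

lemma card_filter_swap:
  "finite A \<Longrightarrow> finite B \<Longrightarrow> (\<Sum>a\<in>A. card {b \<in> B. P a b}) = (\<Sum>b\<in>B. card {a \<in> A. P a b})"
  using sum.swap_restrict[of A B "\<lambda>_ _. 1 :: nat" P] by simp

text \<open>Double counting of the pairs \<open>(a, T)\<close> with \<open>T \<subseteq> R a\<close> and \<open>card T = t\<close>.\<close>

lemma Kovari_Sos_Turan_counting:
  assumes A: "finite A" and B: "finite B" and R: "\<And>a. a \<in> A \<Longrightarrow> R a \<subseteq> B"
    and deg: "\<And>a. a \<in> A \<Longrightarrow> \<delta> \<le> card (R a)"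
    and many: "(t - 1) * (card B choose t) < card A * (\<delta> choose t)"
  obtains T A' where "T \<subseteq> B" "card T = t" "A' \<subseteq> A" "card A' = t" "\<And>a. a \<in> A' \<Longrightarrow> T \<subseteq> R a"
proof -
  define Ts where "Ts = {T. T \<subseteq> B \<and> card T = t}"
  have Ts: "finite Ts" "card Ts = card B choose t"
    unfolding Ts_def using B by (simp_all add: n_subsets)
  have "card A * (\<delta> choose t) \<le> (\<Sum>a\<in>A. card (R a) choose t)"
    using sum_mono[of A "\<lambda>_. \<delta> choose t" "\<lambda>a. card (R a) choose t"] deg binomial_right_mono
    by simp
  also have "\<dots> = (\<Sum>a\<in>A. card {T \<in> Ts. T \<subseteq> R a})"
  proof (intro sum.cong refl)
    fix a assume "a \<in> A"
    then have "{T \<in> Ts. T \<subseteq> R a} = {T. T \<subseteq> R a \<and> card T = t}" "finite (R a)"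
      using R B finite_subset unfolding Ts_def by blast+
    then show "card (R a) choose t = card {T \<in> Ts. T \<subseteq> R a}" by (simp add: n_subsets)
  qed
  also have "\<dots> = (\<Sum>T\<in>Ts. card {a \<in> A. T \<subseteq> R a})"
    by (rule card_filter_swap[OF A Ts(1)])
  finally have "card Ts * (t - 1) < (\<Sum>T\<in>Ts. card {a \<in> A. T \<subseteq> R a})"
    using many Ts(2) by (simp add: mult.commute)
  then have "\<not> (\<forall>T\<in>Ts. card {a \<in> A. T \<subseteq> R a} \<le> t - 1)"
    using sum_bounded_above[of Ts "\<lambda>T. card {a \<in> A. T \<subseteq> R a}" "t - 1"] by auto
  then obtain T where T: "T \<in> Ts" "t \<le> card {a \<in> A. T \<subseteq> R a}"
    by (auto simp: not_le)
  then obtain A' where "A' \<subseteq> {a \<in> A. T \<subseteq> R a}" "card A' = t"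
    by (meson obtain_subset_with_card_n)
  with T(1) show thesis using that unfolding Ts_def by blast
qed

lemma IR_Ktt_star_le:
  assumes "n \<le> N" and many: "(t - 1) * (N choose t) < m * ((N - n + 1) choose t)"
  shows "IR (Ktt_V t) (Ktt_E t) (star_V n) (star_E n) \<le> m + N"
proof -
  define adj where "adj = (\<lambda>(_::nat) (_::nat). True)"
  have arrows: "ind_arrows ({..<m} <+> {..<N}) (bip_edges {..<m} {..<N} adj)
      (Ktt_V t) (Ktt_E t) (star_V n) (star_E n)"
  proof (rule ind_arrows_bip_starI)
    fix col
    assume red: "\<And>a. a \<in> {..<m} \<Longrightarrow>
      card {b \<in> {..<N}. adj a b} < card (red_nbhd {..<N} adj col a) + n"
    have deg: "N - n + 1 \<le> card (red_nbhd {..<N} adj col a)" if "a \<in> {..<m}" for a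
      using red[OF that] \<open>n \<le> N\<close> unfolding adj_def by simp
    have sub: "red_nbhd {..<N} adj col a \<subseteq> {..<N}" for a
      unfolding red_nbhd_def by blast
    obtain T A' where "T \<subseteq> {..<N}" "card T = t" "A' \<subseteq> {..<m}" "card A' = t"
      "\<And>a. a \<in> A' \<Longrightarrow> T \<subseteq> red_nbhd {..<N} adj col a"
      by (rule Kovari_Sos_Turan_counting[of "{..<m}" "{..<N}" "red_nbhd {..<N} adj col" "N - n + 1" t])
        (use deg sub many in auto)
    then show "mono_induced_copy (Ktt_V t) (Ktt_E t) ({..<m} <+> {..<N}) (bip_edges {..<m} {..<N} adj) col True"
      by (intro Ktt_copy_bip[where A'=A' and T=T]) (auto intro: finite_subset)
  qed
  show ?thesis
    using IR_le_card[OF simple_graph_bip_edges[OF finite_lessThan finite_lessThan] arrows]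
    by (simp add: card_Plus)
qed

lemma nat_ceiling_bounds:
  assumes "0 \<le> x"
  shows "x \<le> real (nat \<lceil>x\<rceil>)" "real (nat \<lceil>x\<rceil>) \<le> x + 1"
  using assms by (simp_all add: of_nat_nat)

lemma Ktt_exponent_bounds:
  fixes t :: nat and x :: real
  assumes t: "t \<ge> 1" and x: "real ((4 * t) ^ (2 * t)) \<le> x"
  defines "y \<equiv> x powr (1 - 1 / (2 * real t))"
  shows "1 \<le> y" "sqrt x \<le> y" "4 * real t * y \<le> x" "y ^ t * sqrt x = x ^ t"
proof -
  define s where "s = x powr (1 / (2 * real t))"
  have "1 \<le> (4 * t) ^ (2 * t)" using t by simp
  then have x1: "1 \<le> x" using x by (metis of_nat_1 of_nat_le_iff order_trans)
  have e: "1 / 2 \<le> 1 - 1 / (2 * real t)" "1 - 1 / (2 * real t) \<le> 1"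
    using t by (auto simp: field_simps)
  show "1 \<le> y" unfolding y_def using x1 e by (simp add: ge_one_powr_ge_zero)
  show "sqrt x \<le> y" unfolding y_def using powr_mono[OF e(1) x1] x1 by (simp add: powr_half_sqrt)
  have "real (4 * t) ^ (2 * t) = real (4 * t) powr real (2 * t)"
    using t powr_realpow[of "real (4 * t)" "2 * t"] by simp
  then have "real (4 * t) = (real (4 * t) ^ (2 * t)) powr (1 / (2 * real t))"
    using t by (simp add: powr_powr)
  also have "\<dots> \<le> s" unfolding s_def using x by (intro powr_mono2) auto
  finally have "4 * real t * y \<le> s * y" using \<open>1 \<le> y\<close> by (intro mult_right_mono) auto
  moreover have "s * y = x" unfolding y_def s_def using x1 by (simp add: powr_add[symmetric])
  ultimately show "4 * real t * y \<le> x" by simp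
  have "y ^ t = x powr (real t * (1 - 1 / (2 * real t)))"
    unfolding y_def using x1 by (simp add: powr_power)
  also have "real t * (1 - 1 / (2 * real t)) = real t - 1 / 2"
    using t by (simp add: field_simps)
  finally show "y ^ t * sqrt x = x ^ t"
    using x1 by (simp add: powr_half_sqrt[symmetric] powr_add[symmetric] powr_realpow)
qed

lemma Ktt_counting_condition:
  fixes t m K N :: nat and x y :: real
  assumes t: "t \<ge> 2" and "0 < x" "1 \<le> y" and yx: "y ^ t * sqrt x = x ^ t"
    and N: "t \<le> N" "real N \<le> 2 * x"
    and m: "real t * sqrt x \<le> real m" and K: "2 * real t * y \<le> real K"
  shows "(t - 1) * (N choose t) < m * ((K + 1) choose t)"
proof -
  have "2 * real t * 1 \<le> 2 * real t * y" using \<open>1 \<le> y\<close> by (intro mult_left_mono) auto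
  then have "t \<le> K + 1" using K by simp
  have "real (N choose t) \<le> real N ^ t"
    using binomial_le_pow[OF N(1)] by (metis of_nat_le_iff of_nat_power)
  have "real ((t - 1) * (N choose t)) = (real t - 1) * real (N choose t)"
    using t by simp
  also have "\<dots> \<le> (real t - 1) * real N ^ t"
    using \<open>real (N choose t) \<le> real N ^ t\<close> t by (intro mult_left_mono) auto
  also have "\<dots> \<le> (real t - 1) * (2 * x) ^ t"
    using N(2) t by (intro mult_left_mono power_mono) auto
  also have "\<dots> < real t * (2 * x) ^ t"
    using \<open>0 < x\<close> by (simp add: algebra_simps)
  also have "\<dots> = real t * sqrt x * (2 * y) ^ t"
    using yx by (simp add: power_mult_distrib mult_ac)
  also have "\<dots> \<le> real m * (real (K + 1) / real t) ^ t"
    using m K t \<open>1 \<le> y\<close> by (intro mult_mono power_mono) (auto simp: field_simps)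
  also have "\<dots> \<le> real m * real ((K + 1) choose t)"
    by (intro mult_left_mono binomial_ge_n_over_k_pow_k \<open>t \<le> K + 1\<close>) auto
  finally show ?thesis by (simp only: of_nat_mult[symmetric] of_nat_less_iff)
qed

lemma IR_Ktt_star_bound:
  fixes t n :: nat
  assumes t: "t \<ge> 2" and n: "n > (4 * t) ^ (2 * t)"
  shows "real (IR (Ktt_V t) (Ktt_E t) (star_V n) (star_E n))
    \<le> real n + 6 * real t * real n powr (1 - 1 / (2 * real t))"
proof -
  define y where "y = real n powr (1 - 1 / (2 * real t))"
  define m where "m = t * nat \<lceil>sqrt (real n)\<rceil>"
  define K where "K = 2 * t * nat \<lceil>y\<rceil>"
  have "1 \<le> t" using t by simp
  have "real ((4 * t) ^ (2 * t)) \<le> real n"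
    by (intro iffD2[OF of_nat_le_iff] less_imp_le n)
  then have y: "1 \<le> y" "sqrt (real n) \<le> y" "4 * real t * y \<le> real n"
    "y ^ t * sqrt (real n) = real n ^ t"
    unfolding y_def by (rule Ktt_exponent_bounds[OF \<open>1 \<le> t\<close>])+
  have m: "real t * sqrt (real n) \<le> real m" "real m \<le> real t * (sqrt (real n) + 1)"
    unfolding m_def of_nat_mult using nat_ceiling_bounds[of "sqrt (real n)"]
    by (auto intro!: mult_left_mono)
  have K: "2 * real t * y \<le> real K" "real K \<le> 2 * real t * (y + 1)"
    unfolding K_def of_nat_mult using nat_ceiling_bounds[of y] y(1)
    by (auto intro!: mult_left_mono)
  have ty: "real t * 1 \<le> real t * y" "real t * sqrt (real n) \<le> real t * y"
    using y(1,2) by (intro mult_left_mono; simp)+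
  then have "t \<le> n" using y(3) by simp
  have "real K \<le> real n" using K(2) ty(1) y(3) by (simp add: algebra_simps)
  then have "real (n + K) \<le> 2 * real n" by simp
  moreover have "0 < real n" "t \<le> n + K" using t \<open>t \<le> n\<close> by auto
  ultimately have "(t - 1) * ((n + K) choose t) < m * ((K + 1) choose t)"
    using Ktt_counting_condition[OF t _ y(1) y(4) _ _ m(1) K(1)] by blast
  then have "IR (Ktt_V t) (Ktt_E t) (star_V n) (star_E n) \<le> m + (n + K)"
    by (intro IR_Ktt_star_le) simp_all
  then have "real (IR (Ktt_V t) (Ktt_E t) (star_V n) (star_E n)) \<le> real m + real n + real K"
    by linarith
  also have "\<dots> \<le> real n + 6 * real t * y"
    using m(2) K(2) ty by (simp add: algebra_simps)
  finally show ?thesis unfolding y_def .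
qed

section \<open>The coordinate graph against stars\<close>

lemma ex_mutual_pair:
  assumes A: "finite A" and S: "\<And>a. a \<in> A \<Longrightarrow> S a \<subseteq> A - {a}"
    and large: "\<And>a. a \<in> A \<Longrightarrow> card A \<le> 2 * card (S a)" and "A \<noteq> {}"
  obtains a a' where "a \<in> A" "a' \<in> S a" "a \<in> S a'"
proof (rule ccontr)
  assume no_pair: "\<not> thesis"
  define P where "P = Sigma A S"
  have fin: "finite (S a)" if "a \<in> A" for a using S[OF that] A by (auto intro: finite_subset)
  have "card A * card A \<le> 2 * card P"
    using sum_mono[of A "\<lambda>_. card A" "\<lambda>a. 2 * card (S a)"] large fin A
    unfolding P_def by (simp add: sum_distrib_left)
  moreover have "P \<inter> P\<inverse> = {}" using no_pair that unfolding P_def by blast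
  then have "card (P \<union> P\<inverse>) = 2 * card P"
    using A fin unfolding P_def by (simp add: card_Un_disjoint)
  moreover have "P \<union> P\<inverse> \<subseteq> A \<times> A - (\<lambda>a. (a, a)) ` A" using S unfolding P_def by blast
  then have "card (P \<union> P\<inverse>) \<le> card (A \<times> A - (\<lambda>a. (a, a)) ` A)"
    using A by (intro card_mono) auto
  moreover have "card (A \<times> A - (\<lambda>a. (a, a)) ` A) = card A * card A - card A"
    using A by (subst card_Diff_subset) (auto simp: card_image inj_on_def card_cartesian_product)
  moreover have "0 < card A" using A \<open>A \<noteq> {}\<close> by (simp add: card_gt_0_iff)
  ultimately show False by (metis diff_less le_trans mult_pos_pos not_le)
qed

definition coord_adj :: "nat \<times> nat \<Rightarrow> (nat \<Rightarrow> nat) \<Rightarrow> bool" where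
  "coord_adj a b \<longleftrightarrow> b (fst a) \<noteq> snd a"

text \<open>This is \<open>x \<le> p e\<^sup>x\<^sup>/\<^sup>p\<^sup>-\<^sup>1\<close> multiplied over all coordinates.\<close>

lemma sum_gap_le_ln_prod:
  fixes x :: "nat \<Rightarrow> real" and p \<rho> :: real
  assumes p: "0 < p" and \<rho>: "0 < \<rho>" and x: "\<And>j. j < d \<Longrightarrow> 0 \<le> x j \<and> x j \<le> p"
    and le: "\<rho> \<le> (\<Prod>j<d. x j)"
  shows "(\<Sum>j<d. p - x j) \<le> p * ln (p ^ d / \<rho>)"
proof -
  define S where "S = (\<Sum>j<d. p - x j)"
  have "x j \<le> p * exp (x j / p - 1)" if "j < d" for j
    using exp_ge_add_one_self[of "x j / p - 1"] p by (simp add: field_simps)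
  then have "(\<Prod>j<d. x j) \<le> (\<Prod>j<d. p * exp (x j / p - 1))"
    using x by (intro prod_mono) auto
  also have "\<dots> = p ^ d * exp (- S / p)"
    unfolding S_def using p
    by (simp add: prod.distrib exp_sum[symmetric] sum_divide_distrib[symmetric] sum_subtractf field_simps)
  finally have "\<rho> \<le> p ^ d * exp (- S / p)" using le by linarith
  then have "\<rho> * exp (S / p) \<le> p ^ d" by (simp add: exp_minus field_simps)
  then have "exp (S / p) \<le> p ^ d / \<rho>" using \<rho> by (simp add: field_simps)
  then have "S / p \<le> ln (p ^ d / \<rho>)"
    using \<rho> p by (metis exp_gt_zero ln_exp ln_le_cancel_iff order_less_le_trans)
  then show ?thesis unfolding S_def using p by (simp add: field_simps)
qed

lemma sum_card_gap_le_ln: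
  fixes R :: "(nat \<Rightarrow> nat) set" and \<rho> :: real
  assumes R: "R \<subseteq> PiE {..<d} Y" and Y: "\<And>i. i < d \<Longrightarrow> Y i \<subseteq> {..<p}"
    and \<rho>: "0 < \<rho>" "\<rho> \<le> real (card R)" and "0 < p"
  shows "(\<Sum>i<d. real p - real (card (Y i))) \<le> real p * ln (real p ^ d / \<rho>)"
proof (rule sum_gap_le_ln_prod[OF _ \<rho>(1)])
  have fin: "finite (Y i)" if "i < d" for i using Y[OF that] finite_subset by blast
  show "0 \<le> real (card (Y i)) \<and> real (card (Y i)) \<le> real p" if "i < d" for i
    using card_mono[OF _ Y[OF that]] by simp
  have "card R \<le> card (PiE {..<d} Y)" using R fin by (intro card_mono finite_PiE) auto
  also have "\<dots> = (\<Prod>i<d. card (Y i))" by (simp add: card_PiE)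
  finally have "real (card R) \<le> (\<Prod>i<d. real (card (Y i)))"
    by (metis of_nat_le_iff of_nat_prod)
  then show "\<rho> \<le> (\<Prod>i<d. real (card (Y i)))" using \<rho>(2) by linarith
qed (use \<open>0 < p\<close> in simp)

lemma card_coord_shadow:
  assumes "R \<subseteq> PiE {..<d} (\<lambda>_. {..<p})"
  shows "card {a \<in> {..<d} \<times> {..<p}. \<exists>b\<in>R. \<not> coord_adj a b} = (\<Sum>j<d. card ((\<lambda>b. b j) ` R))"
proof -
  have "{a \<in> {..<d} \<times> {..<p}. \<exists>b\<in>R. \<not> coord_adj a b} = Sigma {..<d} (\<lambda>j. (\<lambda>b. b j) ` R)"
  proof (intro equalityI subsetI)
    fix a assume "a \<in> {a \<in> {..<d} \<times> {..<p}. \<exists>b\<in>R. \<not> coord_adj a b}"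
    then obtain b where "a \<in> {..<d} \<times> {..<p}" "b \<in> R" "b (fst a) = snd a"
      unfolding coord_adj_def by auto
    then show "a \<in> Sigma {..<d} (\<lambda>j. (\<lambda>b. b j) ` R)" by (cases a) auto
  next
    fix a assume "a \<in> Sigma {..<d} (\<lambda>j. (\<lambda>b. b j) ` R)"
    then obtain j b where "j < d" "b \<in> R" "a = (j, b j)" by auto
    moreover have "b j < p" using assms \<open>b \<in> R\<close> \<open>j < d\<close> by (auto simp: PiE_iff)
    ultimately show "a \<in> {a \<in> {..<d} \<times> {..<p}. \<exists>b\<in>R. \<not> coord_adj a b}"
      unfolding coord_adj_def by auto
  qed
  moreover have "finite ((\<lambda>b. b j) ` R)" if "j < d" for j
    by (rule finite_subset[of _ "{..<p}"]) (use PiE_mem[OF subsetD[OF assms]] that in auto)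
  ultimately show ?thesis by simp
qed

lemma coord_2K2_pair:
  fixes \<rho> :: real
  assumes "0 < d" "0 < p"
    and R: "\<And>a. a \<in> {..<d} \<times> {..<p} \<Longrightarrow> R a \<subseteq> PiE {..<d} (\<lambda>_. {..<p})"
    and adj: "\<And>a b. a \<in> {..<d} \<times> {..<p} \<Longrightarrow> b \<in> R a \<Longrightarrow> coord_adj a b"
    and deg: "\<And>a. a \<in> {..<d} \<times> {..<p} \<Longrightarrow> \<rho> \<le> real (card (R a))" and "0 < \<rho>"
    and small: "ln (real p ^ d / \<rho>) \<le> real d / 2"
  obtains a a' b1 b2 where "a \<in> {..<d} \<times> {..<p}" "a' \<in> {..<d} \<times> {..<p}" "a \<noteq> a'"
    "b1 \<in> R a" "b2 \<in> R a'" "\<not> coord_adj a b2" "\<not> coord_adj a' b1"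
proof -
  define S where "S a = {a' \<in> {..<d} \<times> {..<p}. \<exists>b\<in>R a. \<not> coord_adj a' b}" for a
  have "card ({..<d} \<times> {..<p}) \<le> 2 * card (S a)" if a: "a \<in> {..<d} \<times> {..<p}" for a
  proof -
    have "R a \<subseteq> PiE {..<d} (\<lambda>j. (\<lambda>b. b j) ` R a)"
    proof
      fix b assume "b \<in> R a"
      then show "b \<in> PiE {..<d} (\<lambda>j. (\<lambda>b. b j) ` R a)"
        using subsetD[OF R[OF a] \<open>b \<in> R a\<close>] by (simp add: PiE_iff)
    qed
    moreover have "(\<lambda>b. b j) ` R a \<subseteq> {..<p}" if "j < d" for j
      using PiE_mem[OF subsetD[OF R[OF a]]] that by auto
    ultimately have "(\<Sum>j<d. real p - real (card ((\<lambda>b. b j) ` R a)))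
        \<le> real p * ln (real p ^ d / \<rho>)"
      by (rule sum_card_gap_le_ln) (use deg[OF a] \<open>0 < \<rho>\<close> \<open>0 < p\<close> in auto)
    also have "\<dots> \<le> real p * (real d / 2)" using small by (intro mult_left_mono) auto
    finally have "real (d * p) \<le> 2 * real (card (S a))"
      unfolding S_def card_coord_shadow[OF R[OF a]] by (simp add: sum_subtractf)
    then show ?thesis
      unfolding card_cartesian_product card_lessThan by (metis of_nat_le_iff of_nat_mult of_nat_numeral)
  qed
  moreover have "S a \<subseteq> {..<d} \<times> {..<p} - {a}" if "a \<in> {..<d} \<times> {..<p}" for a
    using adj[OF that] unfolding S_def by blast
  ultimately obtain a a' where "a \<in> {..<d} \<times> {..<p}" "a' \<in> S a" "a \<in> S a'"
    using ex_mutual_pair[of "{..<d} \<times> {..<p}" S] \<open>0 < d\<close> \<open>0 < p\<close> by blast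
  moreover have "a \<noteq> a'" using calculation adj unfolding S_def by blast
  ultimately show thesis using that unfolding S_def by blast
qed

lemma card_Sigma_le_ln:
  fixes R :: "(nat \<Rightarrow> nat) set" and \<rho> :: real
  assumes R: "R \<subseteq> PiE {..<d} (\<lambda>i. {..<p} - X i)" and X: "\<And>i. X i \<subseteq> {..<p}"
    and \<rho>: "0 < \<rho>" "\<rho> \<le> real (card R)" and "0 < p"
  shows "real (card (Sigma {..<d} X)) \<le> real p * ln (real p ^ d / \<rho>)"
proof -
  have "real p - real (card ({..<p} - X i)) = real (card (X i))" for i
    using card_Diff_subset[OF finite_subset[OF X] X] card_mono[OF _ X] by (simp add: of_nat_diff)
  moreover have "finite (X i)" for i using X finite_subset by blast
  ultimately show ?thesis
    using sum_card_gap_le_ln[OF R _ \<rho> \<open>0 < p\<close>] by simp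
qed

text \<open>Take \<open>a\<^sub>0\<close> with \<open>b \<in> R a\<^sub>0\<close>. By \<open>no_P4\<close>, no word of \<open>R a\<^sub>0\<close> takes in coordinate \<open>i\<close>
  a value \<open>v\<close> with \<open>b \<in> R (i, v)\<close>, so \<open>R a\<^sub>0\<close> lies in a box that misses all these values.\<close>

lemma coord_codegree_le:
  fixes \<rho> :: real
  assumes "0 < d" "0 < p"
    and R: "\<And>a. a \<in> {..<d} \<times> {..<p} \<Longrightarrow> R a \<subseteq> PiE {..<d} (\<lambda>_. {..<p})"
    and adj: "\<And>a b. a \<in> {..<d} \<times> {..<p} \<Longrightarrow> b \<in> R a \<Longrightarrow> coord_adj a b"
    and deg: "\<And>a. a \<in> {..<d} \<times> {..<p} \<Longrightarrow> \<rho> \<le> real (card (R a))" and "0 < \<rho>"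
    and no_P4: "\<And>a a' b1 b2. a \<in> {..<d} \<times> {..<p} \<Longrightarrow> a' \<in> {..<d} \<times> {..<p} \<Longrightarrow> a \<noteq> a' \<Longrightarrow>
      b1 \<in> R a \<Longrightarrow> b2 \<in> R a \<Longrightarrow> b2 \<in> R a' \<Longrightarrow> coord_adj a' b1"
  shows "real (card {a \<in> {..<d} \<times> {..<p}. b \<in> R a}) \<le> real p * ln (real p ^ d / \<rho>)"
proof (cases "\<exists>a0 \<in> {..<d} \<times> {..<p}. b \<in> R a0")
  case False
  have "(0, 0) \<in> {..<d} \<times> {..<p}" using assms by simp
  then have "\<rho> \<le> real (card (PiE {..<d} (\<lambda>_. {..<p})))"
    using deg card_mono[OF _ R] by (metis finite_PiE finite_lessThan of_nat_le_iff order_trans)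
  then have "0 \<le> real p * ln (real p ^ d / \<rho>)" using \<open>0 < \<rho>\<close> by (simp add: card_PiE)
  moreover have empty: "{a \<in> {..<d} \<times> {..<p}. b \<in> R a} = {}" using False by blast
  ultimately show ?thesis by (simp only: empty card.empty of_nat_0)
next
  case True
  then obtain a0 where a0: "a0 \<in> {..<d} \<times> {..<p}" "b \<in> R a0" by blast
  define X where "X i = {v \<in> {..<p}. b \<in> R (i, v)}" for i
  have X: "X i \<subseteq> {..<p}" for i unfolding X_def by blast
  have box: "R a0 \<subseteq> PiE {..<d} (\<lambda>i. {..<p} - X i)"
  proof
    fix b' assume b': "b' \<in> R a0"
    have "b' i \<notin> X i" if "i < d" for i
    proof
      assume "b' i \<in> X i"
      then have "(i, b' i) \<in> {..<d} \<times> {..<p}" "b \<in> R (i, b' i)" using that unfolding X_def by auto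
      moreover have "\<not> coord_adj (i, b' i) b'" unfolding coord_adj_def by simp
      ultimately show False
        using adj[OF a0(1) b'] no_P4[OF a0(1) _ _ b' a0(2)] by fastforce
    qed
    then show "b' \<in> PiE {..<d} (\<lambda>i. {..<p} - X i)"
      using subsetD[OF R[OF a0(1)] b'] by (auto simp: PiE_iff)
  qed
  have "{a \<in> {..<d} \<times> {..<p}. b \<in> R a} = Sigma {..<d} X" unfolding X_def by auto
  then show ?thesis
    using card_Sigma_le_ln[OF box X \<open>0 < \<rho>\<close> deg[OF a0(1)] \<open>0 < p\<close>] by simp
qed

text \<open>Double counting the pairs \<open>(a, b)\<close> with \<open>b \<in> R a\<close> against the codegree bound.\<close>

lemma coord_P4_triple:
  fixes \<rho> :: real
  assumes "0 < d" "0 < p" and B: "B \<subseteq> PiE {..<d} (\<lambda>_. {..<p})"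
    and R: "\<And>a. a \<in> {..<d} \<times> {..<p} \<Longrightarrow> R a \<subseteq> B"
    and adj: "\<And>a b. a \<in> {..<d} \<times> {..<p} \<Longrightarrow> b \<in> R a \<Longrightarrow> coord_adj a b"
    and deg: "\<And>a. a \<in> {..<d} \<times> {..<p} \<Longrightarrow> \<rho> \<le> real (card (R a))" and "0 < \<rho>"
    and many: "real (card B) * ln (real p ^ d / \<rho>) < real d * \<rho>"
  obtains a a' b1 b2 where "a \<in> {..<d} \<times> {..<p}" "a' \<in> {..<d} \<times> {..<p}" "a \<noteq> a'"
    "b1 \<in> R a" "b2 \<in> R a" "b2 \<in> R a'" "\<not> coord_adj a' b1"
proof (rule ccontr)
  note witness = that
  assume "\<not> thesis"
  then have no_P4: "coord_adj a' b1" if "a \<in> {..<d} \<times> {..<p}" "a' \<in> {..<d} \<times> {..<p}" "a \<noteq> a'"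
    "b1 \<in> R a" "b2 \<in> R a" "b2 \<in> R a'" for a a' b1 b2
    using witness[OF that] by blast
  have "R a \<subseteq> PiE {..<d} (\<lambda>_. {..<p})" if "a \<in> {..<d} \<times> {..<p}" for a
    using R[OF that] B by (rule order_trans)
  then have codeg: "real (card {a \<in> {..<d} \<times> {..<p}. b \<in> R a}) \<le> real p * ln (real p ^ d / \<rho>)"
    for b by (rule coord_codegree_le[OF \<open>0 < d\<close> \<open>0 < p\<close> _ adj deg \<open>0 < \<rho>\<close> no_P4])
  have fin: "finite B" using B by (rule finite_subset) (auto intro!: finite_PiE)
  have fA: "finite ({..<d} \<times> {..<p})" by simp
  have "real (d * p) * \<rho> = (\<Sum>a\<in>{..<d} \<times> {..<p}. \<rho>)" by simp
  also have "\<dots> \<le> (\<Sum>a\<in>{..<d} \<times> {..<p}. real (card (R a)))" by (intro sum_mono deg)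
  also have "\<dots> = (\<Sum>a\<in>{..<d} \<times> {..<p}. real (card {b \<in> B. b \<in> R a}))"
  proof (intro sum.cong refl)
    fix a assume "a \<in> {..<d} \<times> {..<p}"
    then have "{b \<in> B. b \<in> R a} = R a" using R by blast
    then show "real (card (R a)) = real (card {b \<in> B. b \<in> R a})" by simp
  qed
  also have "\<dots> = (\<Sum>b\<in>B. real (card {a \<in> {..<d} \<times> {..<p}. b \<in> R a}))"
    by (simp only: of_nat_sum[symmetric] card_filter_swap[OF fA fin])
  also have "\<dots> \<le> real (card B) * (real p * ln (real p ^ d / \<rho>))"
    using sum_mono[of B _ "\<lambda>_. real p * ln (real p ^ d / \<rho>)", OF codeg] by simp
  finally have "real p * (real d * \<rho>) \<le> real p * (real (card B) * ln (real p ^ d / \<rho>))"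
    by (simp add: algebra_simps)
  then show False using many \<open>0 < p\<close> by simp
qed

lemma card_PiE_fiber_le:
  assumes "i < d"
  shows "card {b \<in> PiE {..<d} (\<lambda>_. {..<p}). b i = v} \<le> p ^ (d - 1)"
proof -
  have "{b \<in> PiE {..<d} (\<lambda>_. {..<p}). b i = v} \<subseteq> PiE {..<d} (\<lambda>j. if j = i then {v} else {..<p})"
    by (auto simp: PiE_iff extensional_def)
  then have "card {b \<in> PiE {..<d} (\<lambda>_. {..<p}). b i = v}
      \<le> card (PiE {..<d} (\<lambda>j. if j = i then {v} else {..<p}))"
    by (intro card_mono finite_PiE) auto
  also have "\<dots> = (\<Prod>j<d. if j = i then 1 else p)"
    by (simp add: card_PiE) (intro prod.cong; simp)
  also have "\<dots> = (\<Prod>j\<in>{..<d} - {i}. if j = i then 1 else p)"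
    using assms by (subst prod.remove[of _ i]) auto
  also have "\<dots> = p ^ (d - 1)" using assms by simp
  finally show ?thesis .
qed

lemma coord_red_degree:
  assumes B: "B \<subseteq> PiE {..<d} (\<lambda>_. {..<p})" and a: "a \<in> {..<d} \<times> {..<p}"
    and red: "card {b \<in> B. coord_adj a b} < card (red_nbhd B coord_adj col a) + n"
  shows "real (card B) - real (p ^ (d - 1)) - real n + 1 \<le> real (card (red_nbhd B coord_adj col a))"
proof -
  obtain i v where iv: "a = (i, v)" "i < d" using a by auto
  have "{b \<in> B. \<not> coord_adj a b} \<subseteq> {b \<in> PiE {..<d} (\<lambda>_. {..<p}). b i = v}"
    using B iv unfolding coord_adj_def by auto
  moreover have "finite {b \<in> PiE {..<d} (\<lambda>_. {..<p}). b i = v}"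
    by (rule finite_subset[of _ "PiE {..<d} (\<lambda>_. {..<p})"]) (auto intro!: finite_PiE)
  ultimately have "card {b \<in> B. \<not> coord_adj a b} \<le> card {b \<in> PiE {..<d} (\<lambda>_. {..<p}). b i = v}"
    by (intro card_mono)
  also have "\<dots> \<le> p ^ (d - 1)" by (rule card_PiE_fiber_le[OF iv(2)])
  finally have "card {b \<in> B. \<not> coord_adj a b} \<le> p ^ (d - 1)" .
  moreover have "B = {b \<in> B. coord_adj a b} \<union> {b \<in> B. \<not> coord_adj a b}" by blast
  then have "card B \<le> card {b \<in> B. coord_adj a b} + card {b \<in> B. \<not> coord_adj a b}"
    by (metis card_Un_le)
  ultimately have "card B + 1 \<le> card (red_nbhd B coord_adj col a) + n + p ^ (d - 1)"
    using red by linarith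
  then have "real (card B + 1) \<le> real (card (red_nbhd B coord_adj col a) + n + p ^ (d - 1))"
    by (simp only: of_nat_le_iff)
  then show ?thesis by simp
qed

lemma IR_star_coord_le:
  fixes VH :: "'b set" and EH :: "'b set set" and \<rho> :: real
  assumes "N \<le> p ^ d" and \<rho>: "\<rho> \<le> real N - real (p ^ (d - 1)) - real n + 1"
    and red_copy: "\<And>B col. B \<subseteq> PiE {..<d} (\<lambda>_. {..<p}) \<Longrightarrow> card B = N \<Longrightarrow>
      (\<And>a. a \<in> {..<d} \<times> {..<p} \<Longrightarrow> \<rho> \<le> real (card (red_nbhd B coord_adj col a))) \<Longrightarrow>
      mono_induced_copy VH EH (({..<d} \<times> {..<p}) <+> B) (bip_edges ({..<d} \<times> {..<p}) B coord_adj)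
        col True"
  shows "IR VH EH (star_V n) (star_E n) \<le> d * p + N"
proof -
  obtain B where B: "B \<subseteq> PiE {..<d} (\<lambda>_. {..<p})" "card B = N" "finite B"
    using obtain_subset_with_card_n[of N "PiE {..<d} (\<lambda>_. {..<p})"] assms(1)
    by (auto simp: card_PiE)
  have arrows: "ind_arrows (({..<d} \<times> {..<p}) <+> B) (bip_edges ({..<d} \<times> {..<p}) B coord_adj)
      VH EH (star_V n) (star_E n)"
  proof (rule ind_arrows_bip_starI)
    fix col
    assume red: "\<And>a. a \<in> {..<d} \<times> {..<p} \<Longrightarrow>
      card {b \<in> B. coord_adj a b} < card (red_nbhd B coord_adj col a) + n"
    show "mono_induced_copy VH EH (({..<d} \<times> {..<p}) <+> B)
        (bip_edges ({..<d} \<times> {..<p}) B coord_adj) col True"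
    proof (rule red_copy[OF B(1,2)])
      fix a assume "a \<in> {..<d} \<times> {..<p}"
      then show "\<rho> \<le> real (card (red_nbhd B coord_adj col a))"
        using coord_red_degree[OF B(1) _ red] B(2) \<rho> by fastforce
    qed
  qed
  have "IR VH EH (star_V n) (star_E n) \<le> card (({..<d} \<times> {..<p}) <+> B)"
    by (rule IR_le_card[OF simple_graph_bip_edges[OF _ B(3)] arrows]) simp
  then show ?thesis using B(2,3) by (simp add: card_Plus)
qed

lemma IR_2K2_star_coord_le:
  fixes \<rho> :: real
  assumes "0 < d" "0 < p" "N \<le> p ^ d"
    and \<rho>: "0 < \<rho>" "\<rho> \<le> real N - real (p ^ (d - 1)) - real n + 1"
    and ln_half: "ln (real p ^ d / \<rho>) \<le> real d / 2"
  shows "IR twoK2_V twoK2_E (star_V n) (star_E n) \<le> d * p + N"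
proof (rule IR_star_coord_le[OF \<open>N \<le> p ^ d\<close> \<rho>(2)])
  fix B col
  assume B: "B \<subseteq> PiE {..<d} (\<lambda>_. {..<p})"
    and deg: "\<And>a. a \<in> {..<d} \<times> {..<p} \<Longrightarrow> \<rho> \<le> real (card (red_nbhd B coord_adj col a))"
  have R: "red_nbhd B coord_adj col a \<subseteq> PiE {..<d} (\<lambda>_. {..<p})"
    if "a \<in> {..<d} \<times> {..<p}" for a
    using red_nbhd_subset B by (rule order_trans)
  have adj: "coord_adj a b" if "a \<in> {..<d} \<times> {..<p}" "b \<in> red_nbhd B coord_adj col a" for a b
    using that(2) by (rule red_nbhd_adj)
  obtain a a' b1 b2 where "a \<in> {..<d} \<times> {..<p}" "a' \<in> {..<d} \<times> {..<p}" "a \<noteq> a'"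
    "b1 \<in> red_nbhd B coord_adj col a" "b2 \<in> red_nbhd B coord_adj col a'"
    "\<not> coord_adj a b2" "\<not> coord_adj a' b1"
    by (rule coord_2K2_pair[OF \<open>0 < d\<close> \<open>0 < p\<close> R adj deg \<rho>(1) ln_half])
  then show "mono_induced_copy twoK2_V twoK2_E (({..<d} \<times> {..<p}) <+> B)
      (bip_edges ({..<d} \<times> {..<p}) B coord_adj) col True"
    by - (rule twoK2_copy_bip; assumption)
qed

lemma IR_P4_star_coord_le:
  fixes \<rho> :: real
  assumes "0 < d" "0 < p" "N \<le> p ^ d"
    and \<rho>: "0 < \<rho>" "\<rho> \<le> real N - real (p ^ (d - 1)) - real n + 1"
    and ln_many: "real N * ln (real p ^ d / \<rho>) < real d * \<rho>"
  shows "IR P4_V P4_E (star_V n) (star_E n) \<le> d * p + N"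
proof (rule IR_star_coord_le[OF \<open>N \<le> p ^ d\<close> \<rho>(2)])
  fix B col
  assume B: "B \<subseteq> PiE {..<d} (\<lambda>_. {..<p})" "card B = N"
    and deg: "\<And>a. a \<in> {..<d} \<times> {..<p} \<Longrightarrow> \<rho> \<le> real (card (red_nbhd B coord_adj col a))"
  have adj: "coord_adj a b" if "a \<in> {..<d} \<times> {..<p}" "b \<in> red_nbhd B coord_adj col a" for a b
    using that(2) by (rule red_nbhd_adj)
  obtain a a' b1 b2 where "a \<in> {..<d} \<times> {..<p}" "a' \<in> {..<d} \<times> {..<p}" "a \<noteq> a'"
    "b1 \<in> red_nbhd B coord_adj col a" "b2 \<in> red_nbhd B coord_adj col a"
    "b2 \<in> red_nbhd B coord_adj col a'" "\<not> coord_adj a' b1"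
    by (rule coord_P4_triple[OF \<open>0 < d\<close> \<open>0 < p\<close> B(1) red_nbhd_subset adj deg \<rho>(1)
      ln_many[folded B(2)]])
  then show "mono_induced_copy P4_V P4_E (({..<d} \<times> {..<p}) <+> B)
      (bip_edges ({..<d} \<times> {..<p}) B coord_adj) col True"
    by - (rule P4_copy_bip; assumption)
qed

section \<open>Choice of parameters\<close>

lemma coord_order_le_words:
  fixes k p n :: nat
  assumes k: "8 \<le> k" and p: "4 \<le> p" and n: "2 * n \<le> p ^ k\<^sup>2"
  shows "n + p ^ (k\<^sup>2 - 1) + nat \<lceil>real (p ^ k\<^sup>2) / real k\<rceil> \<le> p ^ k\<^sup>2"
proof -
  define P where "P = real (p ^ k\<^sup>2)"
  have "2 \<le> k\<^sup>2" using le_square[of k] k unfolding power2_eq_square by linarith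
  have "(4::nat) ^ 2 \<le> p ^ 2" using p by (rule power_mono) simp
  also have "\<dots> \<le> p ^ k\<^sup>2" using \<open>2 \<le> k\<^sup>2\<close> p by (intro power_increasing) auto
  finally have "16 \<le> p ^ k\<^sup>2" by simp
  then have P: "16 \<le> P" unfolding P_def by (metis of_nat_le_iff of_nat_numeral)
  have "real p ^ (k\<^sup>2 - 1) * real p = real p ^ k\<^sup>2"
    by (rule power_minus_mult) (use \<open>2 \<le> k\<^sup>2\<close> in linarith)
  then have "real (p ^ (k\<^sup>2 - 1)) = P / real p"
    using p unfolding P_def by (simp add: field_simps)
  moreover have "real (nat \<lceil>P / real k\<rceil>) \<le> P / real k + 1"
    using nat_ceiling_bounds(2)[of "P / real k"] P by simp
  moreover have "real (2 * n) \<le> P" using n unfolding P_def by (simp only: of_nat_le_iff)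
  moreover have "P / real p \<le> P / 4" "P / real k \<le> P / 8"
    using p k P by (intro divide_left_mono; simp)+
  ultimately have "real (n + p ^ (k\<^sup>2 - 1) + nat \<lceil>P / real k\<rceil>) \<le> P"
    unfolding of_nat_add using P by linarith
  then show ?thesis unfolding P_def by (simp only: of_nat_le_iff)
qed

lemma IR_2K2_P4_star_coord_params:
  fixes k p n :: nat
  assumes k: "8 \<le> k" and p: "4 \<le> p" and n: "2 * n \<le> p ^ k\<^sup>2"
  defines "M \<equiv> k\<^sup>2 * p + (n + p ^ (k\<^sup>2 - 1) + nat \<lceil>real (p ^ k\<^sup>2) / real k\<rceil>)"
  shows "IR twoK2_V twoK2_E (star_V n) (star_E n) \<le> M"
    and "IR P4_V P4_E (star_V n) (star_E n) \<le> M"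
proof -
  define d where "d = k\<^sup>2"
  define \<rho> where "\<rho> = real (p ^ d) / real k"
  define N where "N = n + p ^ (d - 1) + nat \<lceil>\<rho>\<rceil>"
  have "0 < d" "0 < p" "0 < \<rho>" using k p unfolding d_def \<rho>_def by auto
  have "N \<le> p ^ d" unfolding N_def d_def \<rho>_def by (rule coord_order_le_words[OF k p n])
  have \<rho>N: "\<rho> \<le> real N - real (p ^ (d - 1)) - real n + 1"
    using nat_ceiling_bounds(1)[of \<rho>] \<open>0 < \<rho>\<close> unfolding N_def of_nat_add by linarith
  have ln\<rho>: "ln (real p ^ d / \<rho>) = ln (real k)" unfolding \<rho>_def using k \<open>0 < p\<close> by simp
  have "ln (real k) < real k" "0 \<le> ln (real k)" using k by simp_all
  have "real k \<le> real d / 2" unfolding d_def using k by (simp add: power2_eq_square)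
  have "real N * ln (real k) \<le> real (p ^ d) * ln (real k)"
    using \<open>N \<le> p ^ d\<close> \<open>0 \<le> ln (real k)\<close> by (intro mult_right_mono) simp_all
  also have "\<dots> < real (p ^ d) * real k" using \<open>ln (real k) < real k\<close> \<open>0 < p\<close> by simp
  also have "\<dots> = real d * \<rho>" unfolding d_def \<rho>_def using k by (simp add: power2_eq_square)
  finally have "real N * ln (real p ^ d / \<rho>) < real d * \<rho>" unfolding ln\<rho> .
  moreover have "ln (real p ^ d / \<rho>) \<le> real d / 2"
    unfolding ln\<rho> using \<open>ln (real k) < real k\<close> \<open>real k \<le> real d / 2\<close> by linarith
  moreover have "M = d * p + N" unfolding M_def N_def d_def \<rho>_def by simp
  ultimately show "IR twoK2_V twoK2_E (star_V n) (star_E n) \<le> M" "IR P4_V P4_E (star_V n) (star_E n) \<le> M"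
    using IR_2K2_star_coord_le[OF \<open>0 < d\<close> \<open>0 < p\<close> \<open>N \<le> p ^ d\<close> \<open>0 < \<rho>\<close> \<rho>N]
      IR_P4_star_coord_le[OF \<open>0 < d\<close> \<open>0 < p\<close> \<open>N \<le> p ^ d\<close> \<open>0 < \<rho>\<close> \<rho>N] by simp_all
qed

lemma power_add_one_le_three_mult_power:
  fixes x :: real
  assumes "0 < x" "real d \<le> x"
  shows "(x + 1) ^ d \<le> 3 * x ^ d"
proof -
  have "(1 + 1 / x) ^ d \<le> exp (1 / x) ^ d"
    using exp_ge_add_one_self[of "1 / x"] \<open>0 < x\<close> by (intro power_mono) auto
  also have "\<dots> = exp (real d / x)" by (simp add: exp_of_nat_mult[symmetric])
  also have "\<dots> \<le> exp 1" using assms by simp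
  also have "\<dots> \<le> 3" by (rule exp_le)
  finally have "x ^ d * (1 + 1 / x) ^ d \<le> x ^ d * 3" using \<open>0 < x\<close> by (intro mult_left_mono) auto
  moreover have "x * (1 + 1 / x) = x + 1" using \<open>0 < x\<close> by (simp add: field_simps)
  then have "x ^ d * (1 + 1 / x) ^ d = (x + 1) ^ d" by (metis power_mult_distrib)
  ultimately show ?thesis by simp
qed

lemma coord_order_bound:
  fixes k p n :: nat and q x X1 X2 :: real
  assumes q: "8 \<le> q" "q \<le> real k" "real k \<le> q + 1"
    and x: "0 < X1" "X1 \<le> x" "x \<le> X2" "x \<le> real p" "real p \<le> x + 1"
    and P: "real p ^ k\<^sup>2 \<le> 6 * real n"
  shows "real (k\<^sup>2 * p + (n + p ^ (k\<^sup>2 - 1) + nat \<lceil>real (p ^ k\<^sup>2) / real k\<rceil>))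
    \<le> real n + (6 * real n / X1 + (q + 1)\<^sup>2 * (X2 + 1) + 1) + 6 * real n / q"
proof -
  have "0 < k" "0 < p" using q x by auto
  have "real k ^ 2 \<le> (q + 1)\<^sup>2" using q by (intro power_mono) auto
  then have "real k ^ 2 * real p \<le> (q + 1)\<^sup>2 * (X2 + 1)"
    using x by (intro mult_mono) auto
  then have "real (k\<^sup>2 * p) \<le> (q + 1)\<^sup>2 * (X2 + 1)" by (simp only: of_nat_mult of_nat_power)
  moreover have "real (p ^ (k\<^sup>2 - 1)) \<le> 6 * real n / X1"
  proof -
    have "real p ^ (k\<^sup>2 - 1) * real p = real p ^ k\<^sup>2"
      using \<open>0 < k\<close> by (intro power_minus_mult) simp
    then have "real (p ^ (k\<^sup>2 - 1)) = real p ^ k\<^sup>2 / real p"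
      using \<open>0 < p\<close> by (simp add: field_simps)
    also have "\<dots> \<le> 6 * real n / X1"
      using P x by (intro frac_le) auto
    finally show ?thesis .
  qed
  moreover have "real (nat \<lceil>real (p ^ k\<^sup>2) / real k\<rceil>) \<le> 6 * real n / q + 1"
  proof -
    have "real (nat \<lceil>real (p ^ k\<^sup>2) / real k\<rceil>) \<le> real p ^ k\<^sup>2 / real k + 1"
      using nat_ceiling_bounds(2)[of "real (p ^ k\<^sup>2) / real k"] by simp
    also have "real p ^ k\<^sup>2 / real k \<le> 6 * real n / q"
      using P q by (intro frac_le) auto
    finally show ?thesis by simp
  qed
  ultimately show ?thesis by simp
qed

text \<open>Here \<open>ln x powr (1/4)\<close> stands for \<open>k\<close> and \<open>exp (ln (2x) / s)\<close> for the side length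
  \<open>p = (2x)\<^sup>1\<^sup>/\<^sup>d\<close> at \<open>d = s\<close>; the dimension \<open>d = k\<^sup>2\<close> lies between
  \<open>(ln x powr (1/4))\<^sup>2\<close> and \<open>(ln x powr (1/4) + 1)\<^sup>2\<close>.\<close>

lemma coord_parameter_asymptotics:
  "\<forall>\<^sub>F x :: real in at_top. 1 < x \<and> 8 \<le> ln x powr (1/4) \<and>
     (ln x powr (1/4) + 1)\<^sup>2 \<le> exp (ln (2 * x) / (ln x powr (1/4) + 1)\<^sup>2) \<and>
     4 \<le> exp (ln (2 * x) / (ln x powr (1/4) + 1)\<^sup>2) \<and>
     6 * x / exp (ln (2 * x) / (ln x powr (1/4) + 1)\<^sup>2)
       + (ln x powr (1/4) + 1)\<^sup>2 * (exp (ln (2 * x) / (ln x powr (1/4))\<^sup>2) + 1) + 1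
       \<le> 3 * x * ln x powr (-1/4)"
  by (intro eventually_conj; real_asymp)

lemma ceiling_root_power_bounds:
  fixes n d :: nat
  defines "x \<equiv> exp (ln (2 * real n) / real d)"
  assumes "0 < d" "0 < n" "real d \<le> x"
  shows "2 * n \<le> nat \<lceil>x\<rceil> ^ d" "real (nat \<lceil>x\<rceil>) ^ d \<le> 6 * real n"
proof -
  have "0 < x" unfolding x_def by simp
  then have p: "x \<le> real (nat \<lceil>x\<rceil>)" "real (nat \<lceil>x\<rceil>) \<le> x + 1"
    using nat_ceiling_bounds[of x] by auto
  have xd: "x ^ d = 2 * real n"
    unfolding x_def using assms(2,3) by (simp add: exp_of_nat_mult[symmetric])
  have "x ^ d \<le> real (nat \<lceil>x\<rceil>) ^ d" using p \<open>0 < x\<close> by (intro power_mono) auto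
  then have "real (2 * n) \<le> real (nat \<lceil>x\<rceil> ^ d)" using xd by simp
  then show "2 * n \<le> nat \<lceil>x\<rceil> ^ d" by (simp only: of_nat_le_iff)
  have "real (nat \<lceil>x\<rceil>) ^ d \<le> (x + 1) ^ d" using p \<open>0 < x\<close> by (intro power_mono) auto
  also have "\<dots> \<le> 3 * x ^ d" using \<open>0 < x\<close> assms(4) by (rule power_add_one_le_three_mult_power)
  finally show "real (nat \<lceil>x\<rceil>) ^ d \<le> 6 * real n" using xd by simp
qed

lemma IR_2K2_P4_star_le_asymp:
  fixes n :: nat
  defines "q \<equiv> ln (real n) powr (1/4)"
  assumes n: "1 < real n" "8 \<le> q"
    and X1: "(q + 1)\<^sup>2 \<le> exp (ln (2 * real n) / (q + 1)\<^sup>2)" "4 \<le> exp (ln (2 * real n) / (q + 1)\<^sup>2)"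
    and small: "6 * real n / exp (ln (2 * real n) / (q + 1)\<^sup>2)
      + (q + 1)\<^sup>2 * (exp (ln (2 * real n) / q\<^sup>2) + 1) + 1 \<le> 3 * real n * ln (real n) powr (-1/4)"
  shows "real (IR twoK2_V twoK2_E (star_V n) (star_E n)) \<le> real n + 9 * real n * ln (real n) powr (-1/4)"
    and "real (IR P4_V P4_E (star_V n) (star_E n)) \<le> real n + 9 * real n * ln (real n) powr (-1/4)"
proof -
  define X1 where "X1 = exp (ln (2 * real n) / (q + 1)\<^sup>2)"
  define X2 where "X2 = exp (ln (2 * real n) / q\<^sup>2)"
  define k where "k = nat \<lceil>q\<rceil>"
  define x where "x = exp (ln (2 * real n) / real (k\<^sup>2))"
  define p where "p = nat \<lceil>x\<rceil>"
  define M where "M = k\<^sup>2 * p + (n + p ^ (k\<^sup>2 - 1) + nat \<lceil>real (p ^ k\<^sup>2) / real k\<rceil>)"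
  have "0 \<le> q" unfolding q_def by simp
  have k: "q \<le> real k" "real k \<le> q + 1"
    unfolding k_def using nat_ceiling_bounds[OF \<open>0 \<le> q\<close>] by auto
  have "0 < ln (2 * real n)" using n(1) by simp
  have d: "q\<^sup>2 \<le> real (k\<^sup>2)" "real (k\<^sup>2) \<le> (q + 1)\<^sup>2" "0 < q\<^sup>2"
    using k \<open>0 \<le> q\<close> n(2) by (auto intro!: power_mono)
  moreover have "0 < real k" using k n(2) by linarith
  ultimately have x: "X1 \<le> x" "x \<le> X2"
    unfolding X1_def X2_def x_def exp_le_cancel_iff using \<open>0 < ln (2 * real n)\<close> n(2)
    by (auto intro!: divide_left_mono mult_pos_pos)
  have "real (k\<^sup>2) \<le> x" using d(2) X1(1) x unfolding X1_def by linarith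
  then have P: "2 * n \<le> p ^ k\<^sup>2" "real p ^ k\<^sup>2 \<le> 6 * real n"
    using ceiling_root_power_bounds[of "k\<^sup>2" n] \<open>0 < real k\<close> n(1) unfolding p_def x_def by auto
  have p: "x \<le> real p" "real p \<le> x + 1"
    unfolding p_def using nat_ceiling_bounds[of x] X1(2) x unfolding X1_def by auto
  have "8 \<le> k" "4 \<le> p" using k n(2) p x X1 unfolding X1_def by linarith+
  then have "IR twoK2_V twoK2_E (star_V n) (star_E n) \<le> M" "IR P4_V P4_E (star_V n) (star_E n) \<le> M"
    unfolding M_def by (rule IR_2K2_P4_star_coord_params[OF _ _ P(1)]; assumption)+
  moreover have "real M \<le> real n + (6 * real n / X1 + (q + 1)\<^sup>2 * (X2 + 1) + 1) + 6 * real n / q"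
    unfolding M_def by (rule coord_order_bound[OF n(2) k _ x p P(2)]) (simp add: X1_def)
  moreover have "\<dots> \<le> real n + 9 * real n * ln (real n) powr (-1/4)"
    using small unfolding X1_def X2_def q_def by (simp add: powr_minus_divide)
  ultimately show "real (IR twoK2_V twoK2_E (star_V n) (star_E n)) \<le> real n + 9 * real n * ln (real n) powr (-1/4)"
    and "real (IR P4_V P4_E (star_V n) (star_E n)) \<le> real n + 9 * real n * ln (real n) powr (-1/4)"
    by (meson of_nat_le_iff order_trans)+
qed

lemma IR_2K2_P4_star_eventually:
  "\<forall>\<^sub>F n in sequentially.
    real (IR twoK2_V twoK2_E (star_V n) (star_E n)) \<le> real n + 9 * real n * ln (real n) powr (-1/4) \<and>
    real (IR P4_V P4_E (star_V n) (star_E n)) \<le> real n + 9 * real n * ln (real n) powr (-1/4)"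
  using eventually_compose_filterlim[OF coord_parameter_asymptotics filterlim_real_sequentially]
  by (rule eventually_mono) (use IR_2K2_P4_star_le_asymp in blast)

theorem theorem3:
  fixes t :: nat
  assumes "t \<ge> 2"
  shows "\<exists>c::real. c > 0 \<and> (\<exists>n0::nat. \<forall>n::nat. n > n0 \<longrightarrow>
     real (IR twoK2_V twoK2_E (star_V n) (star_E n)) \<le> real n + c * real n * ln (real n) powr (-1/4) \<and>
     real (IR P4_V P4_E (star_V n) (star_E n)) \<le> real n + c * real n * ln (real n) powr (-1/4) \<and>
     real (IR (Ktt_V t) (Ktt_E t) (star_V n) (star_E n)) \<le> real n + c * real n powr (1 - 1 / (2 * real t)))"
proof -
  obtain n1 where n1: "\<And>n. n1 \<le> n \<Longrightarrow>
      real (IR twoK2_V twoK2_E (star_V n) (star_E n)) \<le> real n + 9 * real n * ln (real n) powr (-1/4) \<and>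
      real (IR P4_V P4_E (star_V n) (star_E n)) \<le> real n + 9 * real n * ln (real n) powr (-1/4)"
    using IR_2K2_P4_star_eventually unfolding eventually_sequentially by blast
  define c where "c = max 9 (6 * real t)"
  show ?thesis
  proof (intro exI conjI allI impI)
    show "0 < c" unfolding c_def by simp
    fix n :: nat
    assume "max n1 ((4 * t) ^ (2 * t)) < n"
    then have "n1 \<le> n" "(4 * t) ^ (2 * t) < n" by auto
    have "9 * real n * ln (real n) powr (-1/4) \<le> c * real n * ln (real n) powr (-1/4)"
      unfolding c_def by (intro mult_right_mono) auto
    then show "real (IR twoK2_V twoK2_E (star_V n) (star_E n)) \<le> real n + c * real n * ln (real n) powr (-1/4)"
      and "real (IR P4_V P4_E (star_V n) (star_E n)) \<le> real n + c * real n * ln (real n) powr (-1/4)"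
      using n1[OF \<open>n1 \<le> n\<close>] by linarith+
    have "6 * real t * real n powr (1 - 1 / (2 * real t)) \<le> c * real n powr (1 - 1 / (2 * real t))"
      unfolding c_def by (intro mult_right_mono) auto
    then show "real (IR (Ktt_V t) (Ktt_E t) (star_V n) (star_E n)) \<le> real n + c * real n powr (1 - 1 / (2 * real t))"
      using IR_Ktt_star_bound[OF assms \<open>(4 * t) ^ (2 * t) < n\<close>] by linarith
  qed
qed

end
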